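(* Let $G$ and $H$ be finite abelian groups, written additively, of the same even order $k>2$, let $f:G\to H$ be semi-planar, and suppose $S(G,H;f)$ splits into two substructures $S_1$ and $S_2$ with $\mathcal{L}(0,0)\in S_1$. For $i=1,2$ let $P_0^i=\{b\in H : \mathcal{L}(0,b)\in S_i\}$. Then $P_0^1$ is a subgroup of $H$ of index $2$, and $P_0^2$ is its (non-trivial) coset $H\setminus P_0^1$.
   Context: A function $f:G\to H$ is semi-planar if for every non-identity $a\in G$ and every $y\in H$, the equation $f(x+a)-f(x)=y$ has either $0$ or $2$ solutions $x\in G$. The incidence structure $S(G,H;f)$ has points $(x,y)\in G\times H$ and lines $\mathcal{L}(a,b)$ for $(a,b)\in G\times H$, with $(x,y)$ incident with $\mathcal{L}(a,b)$ iff $y=f(x-a)+b$. Its incidence graph is the bipartite graph on points and lines with an edge for each incident pair. $S(G,H;f)$ splits into two substructures $S_1,S_2$ if its incidence graph has exactly two connected components; $S_1,S_2$ are the incidence structures formed by the points and lines of the two components, and $\mathcal{L}(a,b)\in S_i$ means the line lies in component $S_i$. *)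

theory Defs
  imports Main
begin

definition semi_planar :: "('g::{ab_group_add,finite} \<Rightarrow> 'h::ab_group_add) \<Rightarrow> bool" where
  "semi_planar f \<longleftrightarrow>
     (\<forall>a y. a \<noteq> 0 \<longrightarrow> card {x. f (x + a) - f x = y} \<in> {0, 2})"

definition incident :: "('g::ab_group_add \<Rightarrow> 'h::ab_group_add) \<Rightarrow> 'g \<times> 'h \<Rightarrow> 'g \<times> 'h \<Rightarrow> bool" where
  "incident f p l \<longleftrightarrow> snd p = f (fst p - fst l) + snd l"

definition inc_edge :: "('g::ab_group_add \<Rightarrow> 'h::ab_group_add) \<Rightarrow>
    ('g \<times> 'h) + ('g \<times> 'h) \<Rightarrow> ('g \<times> 'h) + ('g \<times> 'h) \<Rightarrow> bool" where
  "inc_edge f u v \<longleftrightarrow>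
     (\<exists>p l. (u = Inl p \<and> v = Inr l \<or> u = Inr l \<and> v = Inl p) \<and> incident f p l)"

definition inc_components :: "('g::ab_group_add \<Rightarrow> 'h::ab_group_add) \<Rightarrow>
    (('g \<times> 'h) + ('g \<times> 'h)) set set" where
  "inc_components f = UNIV // {(u, v). (inc_edge f)\<^sup>*\<^sup>* u v}"

text \<open>S(G,H;f) splits into two substructures: incidence graph has exactly two components.\<close>
definition splits_in_two :: "('g::ab_group_add \<Rightarrow> 'h::ab_group_add) \<Rightarrow> bool" where
  "splits_in_two f \<longleftrightarrow> card (inc_components f) = 2"

definition add_subgroup :: "'h::ab_group_add set \<Rightarrow> bool" where
  "add_subgroup P \<longleftrightarrow> 0 \<in> P \<and> (\<forall>x\<in>P. \<forall>y\<in>P. x + y \<in> P) \<and> (\<forall>x\<in>P. - x \<in> P)"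

end

theory Submission
  imports Defs
begin

text \<open>The translations (x, y) \<mapsto> (x + c, y + d), applied simultaneously to points and lines, are
  automorphisms of S(G,H;f) and therefore permute its components. Translating by (0, b) shows that
  P = {b. L(0,b) \<in> S1} is a subgroup of H. Every vertex is joined to some line L(0,b), so P is
  proper; and since there are only two components, any two lines L(0,b), L(0,c) outside S1 lie in
  S2 together, whence b - c \<in> P and P has index 2.\<close>

lemma rtranclp_map:
  assumes "\<And>u v. r u v \<Longrightarrow> r (g u) (g v)" and "r\<^sup>*\<^sup>* u v"
  shows "r\<^sup>*\<^sup>* (g u) (g v)"
  using assms(2) by induction (auto intro: rtranclp.rtrancl_into_rtrancl assms(1))

lemma quotient_two_classes:
  assumes "equiv A r" "A // r = {S1, S2}" "S1 \<noteq> S2" "u \<in> S1"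
  shows quotient_two_classes_fst: "S1 = r `` {u}"
    and quotient_two_classes_snd: "S2 = A - S1"
    and quotient_two_classes_snd_ne: "S2 \<noteq> {}"
    and quotient_two_classes_snd_rel: "\<lbrakk>v \<in> S2; w \<in> S2\<rbrakk> \<Longrightarrow> (v, w) \<in> r"
proof -
  have S1: "S1 \<in> A // r" and S2: "S2 \<in> A // r" using assms(2) by auto
  have "u \<in> A" using S1 assms(1,4) in_quotient_imp_subset by blast
  then show "S1 = r `` {u}"
    using quotient_eq_iff[OF assms(1) S1 quotientI[OF \<open>u \<in> A\<close>] assms(4)]
      equiv_class_self[OF assms(1)] by blast
  show "S2 = A - S1"
    using Union_quotient[OF assms(1)] quotient_disj[OF assms(1) S1 S2] assms(2,3) by auto
  show "S2 \<noteq> {}" using in_quotient_imp_non_empty[OF assms(1) S2] .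
  show "(v, w) \<in> r" if "v \<in> S2" "w \<in> S2"
    using quotient_eq_iff[OF assms(1) S2 S2 that] by simp
qed

definition inc_translate :: "'g::ab_group_add \<Rightarrow> 'h::ab_group_add \<Rightarrow>
    ('g \<times> 'h) + ('g \<times> 'h) \<Rightarrow> ('g \<times> 'h) + ('g \<times> 'h)" where
  "inc_translate c d = map_sum (\<lambda>(x, y). (x + c, y + d)) (\<lambda>(x, y). (x + c, y + d))"

lemma inc_translate_Inr [simp]: "inc_translate c d (Inr (a, b)) = Inr (a + c, b + d)"
  by (simp add: inc_translate_def)

lemma inc_edge_translate:
  assumes "inc_edge f u v"
  shows "inc_edge f (inc_translate c d u) (inc_translate c d v)"
proof -
  obtain x y a b where uv: "u = Inl (x, y) \<and> v = Inr (a, b) \<or> u = Inr (a, b) \<and> v = Inl (x, y)"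
    and inc: "y = f (x - a) + b"
    using assms unfolding inc_edge_def incident_def by force
  have "y + d = f ((x + c) - (a + c)) + (b + d)" using inc by (simp add: algebra_simps)
  then show ?thesis using uv unfolding inc_edge_def incident_def inc_translate_def by force
qed

lemma inc_connected_translate:
  "(inc_edge f)\<^sup>*\<^sup>* u v \<Longrightarrow> (inc_edge f)\<^sup>*\<^sup>* (inc_translate c d u) (inc_translate c d v)"
  by (rule rtranclp_map[of "inc_edge f", OF inc_edge_translate])

lemma symp_inc_edge: "symp (inc_edge f)"
  unfolding inc_edge_def by (rule sympI) blast

lemma equiv_inc_connected: "equiv UNIV {(u, v). (inc_edge f)\<^sup>*\<^sup>* u v}"
  by (simp add: equivp_equiv equivp_rtranclp[OF symp_inc_edge])

lemma inc_connected_sym: "(inc_edge f)\<^sup>*\<^sup>* u v \<Longrightarrow> (inc_edge f)\<^sup>*\<^sup>* v u"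
  using symp_rtranclp[OF symp_inc_edge] by (blast dest: sympD)

lemma inc_connected_to_zero_line:
  "\<exists>b. (inc_edge f)\<^sup>*\<^sup>* (Inr (0, b)) v"
proof (cases v)
  case (Inl p)
  obtain x y where "p = (x, y)" by force
  then have "inc_edge f (Inr (0, y - f x)) v"
    unfolding inc_edge_def incident_def Inl by auto
  then show ?thesis by blast
next
  case (Inr l)
  obtain a b where l: "l = (a, b)" by force
  have "inc_edge f (Inr (0, f 0 + b - f a)) (Inl (a, f 0 + b))"
    and "inc_edge f (Inl (a, f 0 + b)) v"
    unfolding inc_edge_def incident_def Inr l by auto
  then show ?thesis by (meson converse_rtranclp_into_rtranclp r_into_rtranclp)
qed

lemma add_subgroup_connected_zero_lines:
  "add_subgroup {b. (inc_edge f)\<^sup>*\<^sup>* (Inr (0, 0)) (Inr (0, b))}"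
  unfolding add_subgroup_def
proof (intro conjI ballI; clarify)
  fix x y
  assume "(inc_edge f)\<^sup>*\<^sup>* (Inr (0, 0)) (Inr (0, x))" "(inc_edge f)\<^sup>*\<^sup>* (Inr (0, 0)) (Inr (0, y))"
  then show "(inc_edge f)\<^sup>*\<^sup>* (Inr (0, 0)) (Inr (0, x + y))"
    using inc_connected_translate[of f "Inr (0, 0)" "Inr (0, y)" 0 x] by (simp add: add.commute)
next
  fix x
  assume "(inc_edge f)\<^sup>*\<^sup>* (Inr (0, 0)) (Inr (0, x))"
  from inc_connected_translate[OF this, of 0 "- x"]
  show "(inc_edge f)\<^sup>*\<^sup>* (Inr (0, 0)) (Inr (0, - x))" by (simp add: inc_connected_sym)
qed

lemma add_subgroup_index_two:
  fixes P :: "'h::{ab_group_add, finite} set"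
  assumes P: "add_subgroup P" and h: "h \<notin> P"
    and diff: "\<And>b c. b \<notin> P \<Longrightarrow> c \<notin> P \<Longrightarrow> b - c \<in> P"
  shows "UNIV - P = (+) h ` P" and "card (UNIV :: 'h set) = 2 * card P"
proof -
  have add: "x + y \<in> P" if "x \<in> P" "y \<in> P" for x y
    using P that unfolding add_subgroup_def by blast
  have neg: "- x \<in> P" if "x \<in> P" for x
    using P that unfolding add_subgroup_def by blast
  show coset: "UNIV - P = (+) h ` P"
  proof (intro set_eqI iffI)
    fix b assume "b \<in> UNIV - P"
    then have "b - h \<in> P" using diff h by blast
    then show "b \<in> (+) h ` P" by (rule rev_image_eqI) simp
  next
    fix b assume "b \<in> (+) h ` P"
    then obtain p where p: "p \<in> P" "b = h + p" by blast
    have "b \<notin> P"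
    proof
      assume "b \<in> P"
      then have "b + - p \<in> P" using add neg p(1) by blast
      with h p(2) show False by simp
    qed
    then show "b \<in> UNIV - P" by simp
  qed
  have "card (UNIV :: 'h set) = card (P \<union> (UNIV - P))" by simp
  also have "\<dots> = card P + card (UNIV - P)" by (rule card_Un_disjoint) auto
  also have "card (UNIV - P) = card P"
    unfolding coset by (rule card_image) (simp add: inj_on_def)
  finally show "card (UNIV :: 'h set) = 2 * card P" by simp
qed

theorem theorem2:
  fixes f :: "'g::{ab_group_add,finite} \<Rightarrow> 'h::{ab_group_add,finite}"
    and S1 S2 :: "(('g \<times> 'h) + ('g \<times> 'h)) set"
  assumes same_order: "card (UNIV :: 'g set) = card (UNIV :: 'h set)"
    and even_order: "even (card (UNIV :: 'g set))"
    and order_gt2: "card (UNIV :: 'g set) > 2"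
    and sp: "semi_planar f"
    and split: "splits_in_two f"
    and comps: "inc_components f = {S1, S2}" "S1 \<noteq> S2"
    and L00: "Inr (0, 0) \<in> S1"
  shows "add_subgroup {b. Inr (0, b) \<in> S1}
    \<and> card (UNIV :: 'h set) = 2 * card {b. Inr (0, b) \<in> S1}
    \<and> {b. Inr (0, b) \<in> S2} = UNIV - {b. Inr (0, b) \<in> S1}
    \<and> (\<exists>h. {b. Inr (0, b) \<in> S2} = (\<lambda>x. h + x) ` {b. Inr (0, b) \<in> S1})"
proof -
  let ?conn = "(inc_edge f)\<^sup>*\<^sup>*"
  note two_classes = equiv_inc_connected comps[unfolded inc_components_def] L00
  have S1_eq: "S1 = {v. ?conn (Inr (0, 0)) v}"
    using quotient_two_classes_fst[OF two_classes] by auto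
  have S2_eq: "S2 = UNIV - S1"
    by (rule quotient_two_classes_snd[OF two_classes])
  define P where "P = {b. Inr (0, b) \<in> S1}"
  have P_conn: "P = {b. ?conn (Inr (0, 0)) (Inr (0, b))}"
    unfolding P_def S1_eq by simp
  have S2_lines: "{b. Inr (0, b) \<in> S2} = UNIV - P"
    unfolding P_def S2_eq by auto
  have diff: "b - c \<in> P" if "b \<notin> P" "c \<notin> P" for b c
  proof -
    have "?conn (Inr (0, b)) (Inr (0, c))"
      using quotient_two_classes_snd_rel[OF two_classes] that S2_lines by blast
    from inc_connected_translate[OF this, of 0 "- c"]
    show ?thesis unfolding P_conn by (simp add: inc_connected_sym)
  qed
  obtain h where "h \<notin> P"
  proof -
    obtain v where "v \<notin> S1"
      using quotient_two_classes_snd_ne[OF two_classes] S2_eq by blast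
    moreover obtain b where "?conn (Inr (0, b)) v"
      using inc_connected_to_zero_line by blast
    ultimately have "b \<notin> P"
      unfolding P_conn S1_eq by (auto dest: rtranclp_trans)
    then show thesis by (rule that)
  qed
  have "add_subgroup P"
    unfolding P_conn by (rule add_subgroup_connected_zero_lines)
  with add_subgroup_index_two[OF this \<open>h \<notin> P\<close> diff] S2_lines
  show ?thesis unfolding P_def[symmetric] by blast
qed

end
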